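(* Let $K$ be a field, $n\ge2$, and $\vartheta$ any one of the four types (left, right, pre-two-sided, two-sided). A $K$-subspace $V\subset M_n(K)$ is a minimal non-trivial $\vartheta$-Mathieu subspace of $M_n(K)$ if and only if $V=KA$ for some nonzero $A\in M_n(K)$ which is not a quasi-idempotent.
   Context: $M_n(K)$ is the algebra of $n\times n$ matrices over $K$. $A$ is a quasi-idempotent if $A^2=rA$ for some $r\in K^\times$. A subspace is non-trivial if it is neither $0$ nor the whole algebra; a minimal non-trivial $\vartheta$-Mathieu subspace is one minimal under inclusion among non-trivial $\vartheta$-Mathieu subspaces. A $K$-subspace $V$ of an algebra $\mathcal A$ is a left (resp. right) Mathieu subspace if whenever $a^m\in V$ for all $m\ge1$, then for every $b\in\mathcal A$, $ba^m\in V$ (resp. $a^mb\in V$) for all sufficiently large $m$; pre-two-sided if both left and right; two-sided if whenever $a^m\in V$ for all $m\ge1$, for all $b,c\in\mathcal A$, $ba^mc\in V$ for all sufficiently large $m$. *)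

theory Defs
  imports "Jordan_Normal_Form.Matrix"
begin

definition is_K_subspace :: "nat \<Rightarrow> 'a::field mat set \<Rightarrow> bool" where
  "is_K_subspace n V \<longleftrightarrow> V \<subseteq> carrier_mat n n \<and> 0\<^sub>m n n \<in> V
     \<and> (\<forall>A\<in>V. \<forall>B\<in>V. A + B \<in> V) \<and> (\<forall>c. \<forall>A\<in>V. c \<cdot>\<^sub>m A \<in> V)"

datatype mathieu_type = LeftT | RightT | PreTwoSidedT | TwoSidedT

definition all_powers_in :: "'a::field mat \<Rightarrow> 'a mat set \<Rightarrow> bool" where
  "all_powers_in a V \<longleftrightarrow> (\<forall>m::nat. m \<ge> 1 \<longrightarrow> a ^\<^sub>m m \<in> V)"

definition left_mathieu :: "nat \<Rightarrow> 'a::field mat set \<Rightarrow> bool" where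
  "left_mathieu n V \<longleftrightarrow> is_K_subspace n V \<and>
     (\<forall>a\<in>carrier_mat n n. all_powers_in a V \<longrightarrow>
        (\<forall>b\<in>carrier_mat n n. \<exists>N. \<forall>m\<ge>N. b * a ^\<^sub>m m \<in> V))"

definition right_mathieu :: "nat \<Rightarrow> 'a::field mat set \<Rightarrow> bool" where
  "right_mathieu n V \<longleftrightarrow> is_K_subspace n V \<and>
     (\<forall>a\<in>carrier_mat n n. all_powers_in a V \<longrightarrow>
        (\<forall>b\<in>carrier_mat n n. \<exists>N. \<forall>m\<ge>N. a ^\<^sub>m m * b \<in> V))"

definition two_sided_mathieu :: "nat \<Rightarrow> 'a::field mat set \<Rightarrow> bool" where
  "two_sided_mathieu n V \<longleftrightarrow> is_K_subspace n V \<and>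
     (\<forall>a\<in>carrier_mat n n. all_powers_in a V \<longrightarrow>
        (\<forall>b\<in>carrier_mat n n. \<forall>c\<in>carrier_mat n n. \<exists>N. \<forall>m\<ge>N. b * a ^\<^sub>m m * c \<in> V))"

fun mathieu :: "mathieu_type \<Rightarrow> nat \<Rightarrow> 'a::field mat set \<Rightarrow> bool" where
  "mathieu LeftT n V = left_mathieu n V"
| "mathieu RightT n V = right_mathieu n V"
| "mathieu PreTwoSidedT n V = (left_mathieu n V \<and> right_mathieu n V)"
| "mathieu TwoSidedT n V = two_sided_mathieu n V"

definition nontrivial_subspace :: "nat \<Rightarrow> 'a::field mat set \<Rightarrow> bool" where
  "nontrivial_subspace n V \<longleftrightarrow> V \<noteq> {0\<^sub>m n n} \<and> V \<noteq> carrier_mat n n"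

definition minimal_nontrivial_mathieu :: "mathieu_type \<Rightarrow> nat \<Rightarrow> 'a::field mat set \<Rightarrow> bool" where
  "minimal_nontrivial_mathieu \<theta> n V \<longleftrightarrow> mathieu \<theta> n V \<and> nontrivial_subspace n V \<and>
     (\<forall>W. mathieu \<theta> n W \<and> nontrivial_subspace n W \<and> W \<subseteq> V \<longrightarrow> W = V)"

definition quasi_idempotent :: "'a::field mat \<Rightarrow> bool" where
  "quasi_idempotent A \<longleftrightarrow> (\<exists>r. r \<noteq> 0 \<and> A * A = r \<cdot>\<^sub>m A)"

end

theory Submission
  imports Defs
begin

text \<open>
  If \<open>A\<close> is not quasi-idempotent, an element \<open>a = cA\<close> whose square again lies in \<open>KA\<close> must
  satisfy \<open>a\<^sup>2 = 0\<close>, so all elements with powers in \<open>KA\<close> are nilpotent and \<open>KA\<close> is a Mathieu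
  subspace of every type; being a line it is minimal. Conversely, a non-trivial Mathieu subspace
  \<open>V\<close> always contains a non-zero element \<open>N\<close> with \<open>N\<^sup>2 = 0\<close>, which is not quasi-idempotent, and
  then \<open>KN \<subseteq> V\<close> forces \<open>V = KN\<close> by minimality. The element \<open>N\<close> comes from an idempotent
  \<open>E \<noteq> 0, 1\<close> in \<open>V\<close> (a rescaled quasi-idempotent): the Mathieu property makes \<open>V\<close> contain the
  left or the right ideal generated by \<open>E\<close>, and with \<open>P = 1 - E\<close> a suitable \<open>PUE\<close> resp. \<open>EUP\<close>
  is non-zero of square zero.
\<close>

abbreviation line_mat :: "'a::field mat \<Rightarrow> 'a mat set" where
  "line_mat A \<equiv> {c \<cdot>\<^sub>m A | c. True}"

lemma smult_smult_mat: "c \<cdot>\<^sub>m (d \<cdot>\<^sub>m A) = (c * d) \<cdot>\<^sub>m (A::'a::field mat)"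
  by (rule eq_matI) auto

lemma one_smult_mat [simp]: "1 \<cdot>\<^sub>m (A::'a::field mat) = A"
  by (rule eq_matI) auto

lemma zero_smult_mat: "A \<in> carrier_mat nr nc \<Longrightarrow> 0 \<cdot>\<^sub>m A = (0\<^sub>m nr nc :: 'a::field mat)"
  by (rule eq_matI) auto

lemma smult_mat_eq_zero_iff:
  assumes "A \<in> carrier_mat nr nc" and "(r::'a::field) \<noteq> 0"
  shows "r \<cdot>\<^sub>m A = 0\<^sub>m nr nc \<longleftrightarrow> A = 0\<^sub>m nr nc"
proof
  assume "r \<cdot>\<^sub>m A = 0\<^sub>m nr nc"
  then have "(1 / r) \<cdot>\<^sub>m (r \<cdot>\<^sub>m A) = 0\<^sub>m nr nc" by simp
  then show "A = 0\<^sub>m nr nc" using assms(2) by (simp add: smult_smult_mat)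
qed simp

lemma smult_mat_mult_smult_mat:
  assumes "A \<in> carrier_mat n n"
  shows "(c \<cdot>\<^sub>m A) * (d \<cdot>\<^sub>m A) = (c * d) \<cdot>\<^sub>m (A * (A::'a::field mat))"
  using assms by (simp add: mult_smult_assoc_mat[of A n n "d \<cdot>\<^sub>m A" n] mult_smult_distrib[of A n n A n]
      smult_smult_mat)

lemma pow_mat_idempotent:
  assumes "E \<in> carrier_mat n n" and "E * E = E" and "m \<ge> 1"
  shows "E ^\<^sub>m m = (E::'a::field mat)"
  using assms(3)
proof (induction m)
  case (Suc k)
  then show ?case using assms(1,2) by (cases "k = 0") auto
qed simp

lemma pow_mat_square_zero:
  assumes "a \<in> carrier_mat n n" and "a * a = 0\<^sub>m n n" and "m \<ge> 2"
  shows "a ^\<^sub>m m = (0\<^sub>m n n :: 'a::field mat)"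
  using assms(3)
proof (induction m)
  case (Suc k)
  then show ?case using assms(1,2) by (cases "k = 1") auto
qed simp

lemma square_zero_not_quasi_idempotent:
  assumes "N \<in> carrier_mat n n" and "N \<noteq> 0\<^sub>m n n" and "N * N = (0\<^sub>m n n :: 'a::field mat)"
  shows "\<not> quasi_idempotent N"
proof
  assume "quasi_idempotent N"
  then obtain r where r: "r \<noteq> 0" "N * N = r \<cdot>\<^sub>m N" unfolding quasi_idempotent_def by blast
  then have "r \<cdot>\<^sub>m N = 0\<^sub>m n n" using assms(3) by simp
  then show False using smult_mat_eq_zero_iff[OF assms(1) r(1)] assms(2) by simp
qed

lemma quasi_idempotent_rescale_idempotent:
  assumes "B \<in> carrier_mat n n" and "quasi_idempotent (B::'a::field mat)"
  obtains r where "r \<noteq> 0" and "((1 / r) \<cdot>\<^sub>m B) * ((1 / r) \<cdot>\<^sub>m B) = (1 / r) \<cdot>\<^sub>m B"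
proof -
  obtain r where r: "r \<noteq> 0" "B * B = r \<cdot>\<^sub>m B"
    using assms(2) unfolding quasi_idempotent_def by blast
  have "((1 / r) \<cdot>\<^sub>m B) * ((1 / r) \<cdot>\<^sub>m B) = (1 / r) \<cdot>\<^sub>m B"
    using r by (simp add: smult_mat_mult_smult_mat[OF assms(1)] smult_smult_mat power2_eq_square)
  then show thesis by (rule that[OF r(1)])
qed

lemma is_K_subspace_line_mat:
  assumes A: "A \<in> carrier_mat n n"
  shows "is_K_subspace n (line_mat (A::'a::field mat))"
  unfolding is_K_subspace_def
proof (intro conjI ballI allI)
  show "line_mat A \<subseteq> carrier_mat n n" using A by auto
  show "0\<^sub>m n n \<in> line_mat A" using zero_smult_mat[OF A] by (metis (mono_tags) CollectI)
  fix X Y assume "X \<in> line_mat A" "Y \<in> line_mat A"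
  then obtain c d where "X = c \<cdot>\<^sub>m A" "Y = d \<cdot>\<^sub>m A" by auto
  then have "X + Y = (c + d) \<cdot>\<^sub>m A" using add_smult_distrib_right_mat[OF A] by simp
  then show "X + Y \<in> line_mat A" by blast
next
  fix k X assume "X \<in> line_mat A"
  then obtain c where "X = c \<cdot>\<^sub>m A" by auto
  then have "k \<cdot>\<^sub>m X = (k * c) \<cdot>\<^sub>m A" by (simp add: smult_smult_mat)
  then show "k \<cdot>\<^sub>m X \<in> line_mat A" by blast
qed

lemma line_mat_subset:
  assumes "is_K_subspace n V" and "A \<in> V"
  shows "line_mat A \<subseteq> V"
  using assms unfolding is_K_subspace_def by blast

lemma subspace_of_line_mat_eq:
  assumes W: "is_K_subspace n W" and sub: "W \<subseteq> line_mat (A::'a::field mat)"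
    and nz: "W \<noteq> {0\<^sub>m n n}"
  shows "W = line_mat A"
proof
  have Wc: "W \<subseteq> carrier_mat n n" and "0\<^sub>m n n \<in> W"
    using W unfolding is_K_subspace_def by blast+
  then obtain w where w: "w \<in> W" "w \<noteq> 0\<^sub>m n n" using nz by blast
  then obtain c where c: "w = c \<cdot>\<^sub>m A" using sub by auto
  have "c \<noteq> 0"
  proof
    assume "c = 0"
    then have "w = 0 \<cdot>\<^sub>m w" using c by (simp add: smult_smult_mat)
    then show False using w Wc zero_smult_mat by (metis subsetD)
  qed
  show "line_mat A \<subseteq> W"
  proof
    fix X assume "X \<in> line_mat A"
    then obtain d where "X = d \<cdot>\<^sub>m A" by auto
    then have "X = (d / c) \<cdot>\<^sub>m w" using c \<open>c \<noteq> 0\<close> by (simp add: smult_smult_mat)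
    then show "X \<in> W" using W w unfolding is_K_subspace_def by blast
  qed
qed (rule sub)

text \<open>A line cannot contain both \<open>1\<close> and the matrix unit \<open>e\<^sub>0\<^sub>1\<close>: from \<open>1 = c'A\<close> every
  element of the line is a multiple of \<open>1\<close>.\<close>
lemma nontrivial_line_mat:
  assumes n: "n \<ge> 2" and A: "A \<in> carrier_mat n n" and A0: "A \<noteq> (0\<^sub>m n n :: 'a::field mat)"
  shows "nontrivial_subspace n (line_mat A)"
  unfolding nontrivial_subspace_def
proof
  have "A \<in> line_mat A" by (intro CollectI exI[of _ 1]) simp
  then show "line_mat A \<noteq> {0\<^sub>m n n}" using A0 by auto
next
  show "line_mat A \<noteq> carrier_mat n n"
  proof
    assume eq: "line_mat A = carrier_mat n n"
    define M :: "'a mat" where "M = mat n n (\<lambda>(i, j). if i = 0 \<and> j = 1 then 1 else 0)"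
    obtain c' where c': "1\<^sub>m n = c' \<cdot>\<^sub>m A" using eq one_carrier_mat by blast
    have "M \<in> carrier_mat n n" unfolding M_def by simp
    then obtain c where c: "M = c \<cdot>\<^sub>m A" using eq by blast
    have "c' \<noteq> 0"
    proof
      assume "c' = 0"
      then have "(1\<^sub>m n :: 'a mat) $$ (0, 0) = 0\<^sub>m n n $$ (0, 0)" using c' zero_smult_mat[OF A] by simp
      then show False using n by simp
    qed
    then have "M = (c / c') \<cdot>\<^sub>m 1\<^sub>m n" using c c' by (simp add: smult_smult_mat)
    then have "M $$ (0, 1) = ((c / c') \<cdot>\<^sub>m 1\<^sub>m n) $$ (0, 1)" by simp
    then show False using n unfolding M_def by simp
  qed
qed

lemma line_mat_powers_square_zero:
  assumes A: "A \<in> carrier_mat n n" and nq: "\<not> quasi_idempotent A"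
    and a: "a \<in> carrier_mat n n" and ap: "all_powers_in a (line_mat (A::'a::field mat))"
  shows "a * a = 0\<^sub>m n n"
proof -
  have powers: "a ^\<^sub>m m \<in> line_mat A" if "m \<ge> 1" for m
    using ap that unfolding all_powers_in_def by blast
  have "a ^\<^sub>m 1 = a" "a ^\<^sub>m 2 = a * a" using a by (simp_all add: numeral_2_eq_2)
  then obtain c d where c: "a = c \<cdot>\<^sub>m A" and d: "a * a = d \<cdot>\<^sub>m A"
    using powers[of 1] powers[of 2] by auto
  have aa: "a * a = (c * c) \<cdot>\<^sub>m (A * A)" using c smult_mat_mult_smult_mat[OF A] by simp
  show ?thesis
  proof (cases "c = 0")
    case True
    then show ?thesis using c a zero_smult_mat[OF A] by simp
  next
    case False
    have "A * A = (1 / (c * c)) \<cdot>\<^sub>m (a * a)" using aa False by (simp add: smult_smult_mat)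
    also have "\<dots> = (d / (c * c)) \<cdot>\<^sub>m A" using d by (simp add: smult_smult_mat)
    finally have A_sq: "A * A = (d / (c * c)) \<cdot>\<^sub>m A" .
    with nq have "d / (c * c) = 0" unfolding quasi_idempotent_def by blast
    then have "A * A = 0\<^sub>m n n" using A_sq zero_smult_mat[OF A] by (simp only:)
    then show ?thesis using aa by simp
  qed
qed

lemma mathieu_is_K_subspace: "mathieu \<theta> n V \<Longrightarrow> is_K_subspace n V"
  by (cases \<theta>) (auto simp: left_mathieu_def right_mathieu_def two_sided_mathieu_def)

lemma mathieu_if_powers_vanish:
  assumes sub: "is_K_subspace n V"
    and nil: "\<And>a. a \<in> carrier_mat n n \<Longrightarrow> all_powers_in a V \<Longrightarrow> \<exists>N. \<forall>m\<ge>N. a ^\<^sub>m m = 0\<^sub>m n n"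
  shows "mathieu \<theta> n (V :: 'a::field mat set)"
proof -
  have z: "0\<^sub>m n n \<in> V" using sub unfolding is_K_subspace_def by blast
  have "\<exists>N. \<forall>m\<ge>N. b * a ^\<^sub>m m * c \<in> V \<and> b * a ^\<^sub>m m \<in> V \<and> a ^\<^sub>m m * b \<in> V"
    if a: "a \<in> carrier_mat n n" "all_powers_in a V" and bc: "b \<in> carrier_mat n n" "c \<in> carrier_mat n n"
    for a b c
  proof -
    obtain N where "\<forall>m\<ge>N. a ^\<^sub>m m = 0\<^sub>m n n" using nil[OF a] by blast
    then have "\<forall>m\<ge>N. b * a ^\<^sub>m m * c \<in> V \<and> b * a ^\<^sub>m m \<in> V \<and> a ^\<^sub>m m * b \<in> V"
      using bc z by simp
    then show ?thesis by blast
  qed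
  then have "left_mathieu n V" "right_mathieu n V" "two_sided_mathieu n V"
    using sub unfolding left_mathieu_def right_mathieu_def two_sided_mathieu_def
    by (meson one_carrier_mat)+
  then show ?thesis by (cases \<theta>) simp_all
qed

lemma mathieu_line_mat:
  assumes A: "A \<in> carrier_mat n n" and nq: "\<not> quasi_idempotent (A::'a::field mat)"
  shows "mathieu \<theta> n (line_mat A)"
proof (rule mathieu_if_powers_vanish[OF is_K_subspace_line_mat[OF A]])
  fix a assume "a \<in> carrier_mat n n" "all_powers_in a (line_mat A)"
  then show "\<exists>N. \<forall>m\<ge>N. a ^\<^sub>m m = 0\<^sub>m n n"
    using pow_mat_square_zero line_mat_powers_square_zero[OF A nq] by blast
qed

text \<open>An idempotent is its own power, so the Mathieu condition for it holds with no
  ``sufficiently large'' restriction.\<close>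
lemma mathieu_idempotent_ideal:
  assumes M: "mathieu \<theta> n V" and E: "E \<in> carrier_mat n n" "E * E = (E::'a::field mat)"
    and EV: "E \<in> V"
  shows "(\<forall>b\<in>carrier_mat n n. b * E \<in> V) \<or> (\<forall>b\<in>carrier_mat n n. E * b \<in> V)"
proof -
  have pw: "E ^\<^sub>m m = E" if "m \<ge> 1" for m using pow_mat_idempotent[OF E that] .
  have ap: "all_powers_in E V" unfolding all_powers_in_def using pw EV by simp
  have left: "b * E \<in> V" if L: "left_mathieu n V" and b: "b \<in> carrier_mat n n" for b
  proof -
    obtain N where "\<forall>m\<ge>N. b * E ^\<^sub>m m \<in> V" using L b E ap unfolding left_mathieu_def by blast
    then have "b * E ^\<^sub>m (max N 1) \<in> V" by simp
    then show ?thesis using pw[of "max N 1"] by simp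
  qed
  have right: "E * b \<in> V" if R: "right_mathieu n V" and b: "b \<in> carrier_mat n n" for b
  proof -
    obtain N where "\<forall>m\<ge>N. E ^\<^sub>m m * b \<in> V" using R b E ap unfolding right_mathieu_def by blast
    then have "E ^\<^sub>m (max N 1) * b \<in> V" by simp
    then show ?thesis using pw[of "max N 1"] by simp
  qed
  have two_sided: "b * E \<in> V" if T: "two_sided_mathieu n V" and b: "b \<in> carrier_mat n n" for b
  proof -
    obtain N where "\<forall>m\<ge>N. b * E ^\<^sub>m m * 1\<^sub>m n \<in> V"
      using T b E ap unfolding two_sided_mathieu_def by (meson one_carrier_mat)
    then have "b * E ^\<^sub>m (max N 1) * 1\<^sub>m n \<in> V" by simp
    then show ?thesis using pw[of "max N 1"] b E(1) by simp
  qed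
  show ?thesis using M left right two_sided by (cases \<theta>) auto
qed

lemma exists_sandwich_nonzero:
  assumes P: "P \<in> carrier_mat n n" and Q: "Q \<in> carrier_mat n n"
    and "P \<noteq> 0\<^sub>m n n" and "Q \<noteq> (0\<^sub>m n n :: 'a::field mat)"
  shows "\<exists>U\<in>carrier_mat n n. P * U * Q \<noteq> 0\<^sub>m n n"
proof -
  obtain i j where ij: "i < n" "j < n" "P $$ (i, j) \<noteq> 0"
    using assms(3) P by (metis carrier_matD(1,2) eq_matI index_zero_mat(1,2,3))
  obtain k l where kl: "k < n" "l < n" "Q $$ (k, l) \<noteq> 0"
    using assms(4) Q by (metis carrier_matD(1,2) eq_matI index_zero_mat(1,2,3))
  \<comment> \<open>the matrix unit \<open>e\<^sub>j\<^sub>k\<close>, so that \<open>(PUQ)\<^sub>i\<^sub>l = P\<^sub>i\<^sub>j Q\<^sub>k\<^sub>l\<close>\<close>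
  define U :: "'a mat" where "U = mat n n (\<lambda>(s, t). if s = j \<and> t = k then 1 else 0)"
  have U: "U \<in> carrier_mat n n" unfolding U_def by simp
  have PU: "(P * U) $$ (i, t) = (if t = k then P $$ (i, j) else 0)" if "t < n" for t
  proof -
    have "(P * U) $$ (i, t) = (\<Sum>s\<in>{0..<n}. P $$ (i, s) * U $$ (s, t))"
      using P U ij that by (simp add: scalar_prod_def)
    also have "\<dots> = (\<Sum>s\<in>{0..<n}. if s = j then (if t = k then P $$ (i, j) else 0) else 0)"
      by (rule sum.cong) (use that in \<open>auto simp: U_def\<close>)
    finally show ?thesis using ij by simp
  qed
  have "(P * U * Q) $$ (i, l) = (\<Sum>t\<in>{0..<n}. (P * U) $$ (i, t) * Q $$ (t, l))"
    using P U Q ij kl by (simp add: scalar_prod_def del: assoc_mult_mat)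
  also have "\<dots> = (\<Sum>t\<in>{0..<n}. if t = k then P $$ (i, j) * Q $$ (k, l) else 0)"
    by (rule sum.cong) (auto simp: PU)
  finally have "(P * U * Q) $$ (i, l) \<noteq> 0" using ij kl by simp
  then have "P * U * Q \<noteq> 0\<^sub>m n n" using ij kl by auto
  then show ?thesis using U by blast
qed

lemma exists_square_zero_sandwich:
  assumes X: "X \<in> carrier_mat n n" and Y: "Y \<in> carrier_mat n n"
    and "X \<noteq> 0\<^sub>m n n" "Y \<noteq> 0\<^sub>m n n" and YX: "Y * X = (0\<^sub>m n n :: 'a::field mat)"
  shows "\<exists>U\<in>carrier_mat n n. X * U * Y \<noteq> 0\<^sub>m n n \<and> (X * U * Y) * (X * U * Y) = 0\<^sub>m n n"
proof -
  obtain U where U: "U \<in> carrier_mat n n" "X * U * Y \<noteq> 0\<^sub>m n n"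
    using exists_sandwich_nonzero[OF X Y assms(3,4)] by blast
  have XU: "X * U \<in> carrier_mat n n" and UY: "U * Y \<in> carrier_mat n n"
    and XUY: "X * U * Y \<in> carrier_mat n n" using X Y U(1) by auto
  have "Y * (X * U * Y) = (Y * X) * (U * Y)"
    using assoc_mult_mat[OF X U(1) Y] assoc_mult_mat[OF Y X UY] by simp
  also have "\<dots> = 0\<^sub>m n n" using YX UY by (simp add: left_mult_zero_mat)
  finally have Y_XUY: "Y * (X * U * Y) = 0\<^sub>m n n" .
  have "(X * U * Y) * (X * U * Y) = X * U * (Y * (X * U * Y))" by (rule assoc_mult_mat[OF XU Y XUY])
  also have "\<dots> = 0\<^sub>m n n" using Y_XUY right_mult_zero_mat[OF XU] by simp
  finally show ?thesis using U by blast
qed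

lemma idempotent_ideal_has_square_zero:
  assumes E: "E \<in> carrier_mat n n" "E * E = E" "E \<noteq> 0\<^sub>m n n"
    and ne: "\<exists>X\<in>carrier_mat n n. X \<notin> V"
    and ideal: "(\<forall>b\<in>carrier_mat n n. b * E \<in> V) \<or> (\<forall>b\<in>carrier_mat n n. E * b \<in> V)"
  shows "\<exists>N\<in>V. N \<noteq> 0\<^sub>m n n \<and> N * N = (0\<^sub>m n n :: 'a::field mat)"
proof -
  define P where "P = 1\<^sub>m n - E"
  have P: "P \<in> carrier_mat n n" unfolding P_def using E by (simp add: minus_carrier_mat)
  have "E \<noteq> 1\<^sub>m n"
  proof
    assume "E = 1\<^sub>m n"
    then have "b \<in> V" if "b \<in> carrier_mat n n" for b
      using ideal that by (metis left_mult_one_mat right_mult_one_mat)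
    then show False using ne by blast
  qed
  have P0: "P \<noteq> 0\<^sub>m n n"
  proof
    assume "P = 0\<^sub>m n n"
    moreover have "P + E = 1\<^sub>m n" unfolding P_def using E by (intro eq_matI) auto
    ultimately show False using \<open>E \<noteq> 1\<^sub>m n\<close> E(1) by simp
  qed
  have EP: "E * P = 0\<^sub>m n n" unfolding P_def using E
    by (simp add: mult_minus_distrib_mat[of E n n "1\<^sub>m n" n E])
  have PE: "P * E = 0\<^sub>m n n" unfolding P_def using E
    by (simp add: minus_mult_distrib_mat[of "1\<^sub>m n" n n E E n])
  from ideal show ?thesis
  proof
    assume left: "\<forall>b\<in>carrier_mat n n. b * E \<in> V"
    obtain U where U: "U \<in> carrier_mat n n" "P * U * E \<noteq> 0\<^sub>m n n" "(P * U * E) * (P * U * E) = 0\<^sub>m n n"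
      using exists_square_zero_sandwich[OF P E(1) P0 E(3) EP] by blast
    moreover have "P * U * E \<in> V" using left P U(1) by simp
    ultimately show ?thesis by blast
  next
    assume right: "\<forall>b\<in>carrier_mat n n. E * b \<in> V"
    obtain U where U: "U \<in> carrier_mat n n" "E * U * P \<noteq> 0\<^sub>m n n" "(E * U * P) * (E * U * P) = 0\<^sub>m n n"
      using exists_square_zero_sandwich[OF E(1) P E(3) P0 PE] by blast
    moreover have "E * U * P \<in> V" using right E(1) U(1) P by simp
    ultimately show ?thesis by blast
  qed
qed

lemma nontrivial_mathieu_has_non_quasi_idempotent:
  assumes M: "mathieu \<theta> n V" and NT: "nontrivial_subspace n V"
  shows "\<exists>N\<in>V. N \<noteq> 0\<^sub>m n n \<and> \<not> quasi_idempotent (N :: 'a::field mat)"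
proof -
  have Vc: "V \<subseteq> carrier_mat n n" and "0\<^sub>m n n \<in> V"
    and smult: "\<And>c A. A \<in> V \<Longrightarrow> c \<cdot>\<^sub>m A \<in> V"
    using mathieu_is_K_subspace[OF M] unfolding is_K_subspace_def by blast+
  then obtain B where B: "B \<in> V" "B \<noteq> 0\<^sub>m n n" using NT unfolding nontrivial_subspace_def by blast
  have Bc: "B \<in> carrier_mat n n" using B Vc by blast
  show ?thesis
  proof (cases "quasi_idempotent B")
    case False
    then show ?thesis using B by blast
  next
    case True
    then obtain r where r: "r \<noteq> 0" and idem: "((1 / r) \<cdot>\<^sub>m B) * ((1 / r) \<cdot>\<^sub>m B) = (1 / r) \<cdot>\<^sub>m B"
      using quasi_idempotent_rescale_idempotent[OF Bc] by blast
    let ?E = "(1 / r) \<cdot>\<^sub>m B"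
    have E: "?E \<in> carrier_mat n n" "?E \<in> V" "?E \<noteq> 0\<^sub>m n n"
      using Bc B smult r smult_mat_eq_zero_iff[OF Bc] by auto
    have "\<exists>X\<in>carrier_mat n n. X \<notin> V" using NT Vc unfolding nontrivial_subspace_def by blast
    then obtain N where "N \<in> V" "N \<noteq> 0\<^sub>m n n" "N * N = 0\<^sub>m n n"
      using idempotent_ideal_has_square_zero[OF E(1) idem E(3)]
        mathieu_idempotent_ideal[OF M E(1) idem E(2)] by blast
    then show ?thesis using Vc square_zero_not_quasi_idempotent by blast
  qed
qed

theorem proposition5p5:
  fixes \<theta> :: mathieu_type and n :: nat and V :: "'a::field mat set"
  assumes "n \<ge> 2" and "is_K_subspace n V"
  shows "minimal_nontrivial_mathieu \<theta> n V \<longleftrightarrow>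
    (\<exists>A\<in>carrier_mat n n. A \<noteq> 0\<^sub>m n n \<and> \<not> quasi_idempotent A \<and> V = {c \<cdot>\<^sub>m A | c. True})"
proof
  assume "minimal_nontrivial_mathieu \<theta> n V"
  then have M: "mathieu \<theta> n V" and NT: "nontrivial_subspace n V"
    and minimal: "\<And>W. mathieu \<theta> n W \<Longrightarrow> nontrivial_subspace n W \<Longrightarrow> W \<subseteq> V \<Longrightarrow> W = V"
    unfolding minimal_nontrivial_mathieu_def by blast+
  obtain N where N: "N \<in> V" "N \<noteq> 0\<^sub>m n n" "\<not> quasi_idempotent N"
    using nontrivial_mathieu_has_non_quasi_idempotent[OF M NT] by blast
  have Nc: "N \<in> carrier_mat n n" using N(1) assms(2) unfolding is_K_subspace_def by blast
  have "line_mat N = V"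
    using minimal[OF mathieu_line_mat[OF Nc N(3)] nontrivial_line_mat[OF assms(1) Nc N(2)]
        line_mat_subset[OF assms(2) N(1)]] .
  then show "\<exists>A\<in>carrier_mat n n. A \<noteq> 0\<^sub>m n n \<and> \<not> quasi_idempotent A \<and> V = line_mat A"
    using Nc N by blast
next
  assume "\<exists>A\<in>carrier_mat n n. A \<noteq> 0\<^sub>m n n \<and> \<not> quasi_idempotent A \<and> V = line_mat A"
  then obtain A where A: "A \<in> carrier_mat n n" "A \<noteq> 0\<^sub>m n n" "\<not> quasi_idempotent A"
    and V: "V = line_mat A" by blast
  have "W = V" if "mathieu \<theta> n W" "nontrivial_subspace n W" "W \<subseteq> V" for W
    using subspace_of_line_mat_eq[OF mathieu_is_K_subspace[OF that(1)]] that(2,3)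
    unfolding V nontrivial_subspace_def by blast
  then show "minimal_nontrivial_mathieu \<theta> n V"
    unfolding minimal_nontrivial_mathieu_def
    using V mathieu_line_mat[OF A(1,3)] nontrivial_line_mat[OF assms(1) A(1,2)] by blast
qed

end
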